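(* Let $r\ge1$ and $t\ge0$ be integers and $\alpha\in[\frac12,\frac23]$. Let $\boldsymbol{y}'=(\frac23,\ldots,\frac23,\alpha)\in\mathbb{R}^r$ (i.e. $y'_1=\cdots=y'_{r-1}=\frac23$, $y'_r=\alpha$) and $\boldsymbol{x}'=(\alpha,\ldots,\alpha)\in\mathbb{R}^t$, and let $R(\boldsymbol{y}',\boldsymbol{x}')=A(\boldsymbol{y}',\boldsymbol{x}')/B(\boldsymbol{y}',\boldsymbol{x}')$. If $\frac23(r-1)+\alpha\le(1-\alpha)t$, then \[ R(\boldsymbol{y}',\boldsymbol{x}')\le H_1(\alpha,r,t):=\frac{3(1-\alpha)\big(3\alpha(t+1)(2r+t)+2r(r-1)\big)}{3\alpha+4r^2+(6\alpha-2)r+9(1-\alpha)\alpha t(t+1)-2}. \] Otherwise (if $\frac23(r-1)+\alpha>(1-\alpha)t$), \[ R(\boldsymbol{y}',\boldsymbol{x}')\le H_2(\alpha,r,t):=\frac{6r(r-1)+9\alpha(t+1)(2r+t)}{\big(2r+3\alpha(t+1)-2\big)\big(2r+3\alpha(t+1)+1\big)}. \]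
   Context: For $\boldsymbol{y}\in\mathbb{R}^r_{>0}$ and $\boldsymbol{x}\in[0,1]^t$, set $x_i:=0$ for $i>t$ and define $A(\boldsymbol{y},\boldsymbol{x})=\sum_{i=1}^r i\,y_i+\sum_{i=1}^t (r+i)\,x_i$. Let $\ell\in\mathbb{N}$ be the unique index with $\sum_{i=1}^{\ell-1}(1-x_i)<\sum_{i=1}^r y_i\le\sum_{i=1}^{\ell}(1-x_i)$, and $\rho:=\sum_{i=1}^r y_i-\sum_{i=1}^{\ell-1}(1-x_i)\in(0,1-x_\ell]$. Define $B(\boldsymbol{y},\boldsymbol{x})=\frac12\ell(\ell-1)+(x_\ell+\rho)\ell+\sum_{i=\ell+1}^{t} i\,x_i$ (the last sum being $0$ if $\ell\ge t$). This is the cost of the "pseudo-packing" with weight $1$ in bins $1,\ldots,\ell-1$, weight $x_\ell+\rho$ in bin $\ell$ and weight $x_i$ in bins $i>\ell$. *)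

theory Defs
  imports Complex_Main
begin

text \<open>Vectors y in R^r and x in [0,1]^t are represented as functions nat => real,
  indexed from 1; only the entries y 1..y r and x 1..x t are used.
  xext t x i is x_i extended by x_i = 0 for i > t.\<close>

definition xext :: "nat \<Rightarrow> (nat \<Rightarrow> real) \<Rightarrow> nat \<Rightarrow> real" where
  "xext t x i = (if i \<le> t then x i else 0)"

definition Acost :: "nat \<Rightarrow> nat \<Rightarrow> (nat \<Rightarrow> real) \<Rightarrow> (nat \<Rightarrow> real) \<Rightarrow> real" where
  "Acost r t y x = (\<Sum>i=1..r. real i * y i) + (\<Sum>i=1..t. real (r + i) * x i)"

definition Spart :: "nat \<Rightarrow> (nat \<Rightarrow> real) \<Rightarrow> nat \<Rightarrow> real" where
  "Spart t x k = (\<Sum>i=1..k. 1 - xext t x i)"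

definition lidx :: "nat \<Rightarrow> nat \<Rightarrow> (nat \<Rightarrow> real) \<Rightarrow> (nat \<Rightarrow> real) \<Rightarrow> nat" where
  "lidx r t y x = (THE l. 1 \<le> l \<and> Spart t x (l - 1) < (\<Sum>i=1..r. y i)
                         \<and> (\<Sum>i=1..r. y i) \<le> Spart t x l)"

definition rho :: "nat \<Rightarrow> nat \<Rightarrow> (nat \<Rightarrow> real) \<Rightarrow> (nat \<Rightarrow> real) \<Rightarrow> real" where
  "rho r t y x = (\<Sum>i=1..r. y i) - Spart t x (lidx r t y x - 1)"

definition Bcost :: "nat \<Rightarrow> nat \<Rightarrow> (nat \<Rightarrow> real) \<Rightarrow> (nat \<Rightarrow> real) \<Rightarrow> real" where
  "Bcost r t y x = (let l = lidx r t y x in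
     real l * (real l - 1) / 2 + (xext t x l + rho r t y x) * real l
     + (\<Sum>i=l+1..t. real i * x i))"

definition Rratio :: "nat \<Rightarrow> nat \<Rightarrow> (nat \<Rightarrow> real) \<Rightarrow> (nat \<Rightarrow> real) \<Rightarrow> real" where
  "Rratio r t y x = Acost r t y x / Bcost r t y x"

definition H1 :: "real \<Rightarrow> nat \<Rightarrow> nat \<Rightarrow> real" where
  "H1 a r t = 3 * (1 - a) * (3 * a * (real t + 1) * (2 * real r + real t) + 2 * real r * (real r - 1))
     / (3 * a + 4 * (real r)^2 + (6 * a - 2) * real r + 9 * (1 - a) * a * real t * (real t + 1) - 2)"

definition H2 :: "real \<Rightarrow> nat \<Rightarrow> nat \<Rightarrow> real" where
  "H2 a r t = (6 * real r * (real r - 1) + 9 * a * (real t + 1) * (2 * real r + real t))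
     / ((2 * real r + 3 * a * (real t + 1) - 2) * (2 * real r + 3 * a * (real t + 1) + 1))"

end

theory Submission
  imports Defs
begin

text \<open>For constant items x_i = \<alpha> the partial sums of the free capacities 1 - x_i grow with
  slope c = 1 - \<alpha> up to bin t and with slope 1 beyond, so the index l is found by bracketing the
  total weight S (respectively S + \<alpha> t, once l > t) between consecutive multiples of the slope.
  If p, q \<ge> 0 are the distances of that quantity to the two ends of its bracket, then B equals an
  explicit quadratic plus p q / (2 c) (resp. p q / 2), so B is at least the quadratic.
  H1 and H2 are exactly 2 c A resp. 2 A divided by these quadratics.\<close>

lemma Spart_Suc: "Spart t x (Suc k) = Spart t x k + (1 - xext t x (Suc k))"
  by (simp add: Spart_def)

lemma mono_Spart:
  assumes "\<And>i. i \<le> t \<Longrightarrow> x i \<le> 1"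
  shows "mono (Spart t x)"
proof (rule incseq_SucI)
  fix k
  have "xext t x (Suc k) \<le> 1" using assms by (simp add: xext_def)
  then show "Spart t x k \<le> Spart t x (Suc k)" by (simp add: Spart_Suc)
qed

lemma Spart_const_le:
  assumes "k \<le> t"
  shows "Spart t (\<lambda>_. a) k = (1 - a) * real k"
  using assms
proof (induction k)
  case (Suc k)
  then show ?case by (simp add: Spart_Suc xext_def algebra_simps)
qed (simp add: Spart_def)

lemma Spart_const_ge:
  assumes "t \<le> k"
  shows "Spart t (\<lambda>_. a) k = real k - a * real t"
  using assms
proof (induction k rule: dec_induct)
  case base
  then show ?case by (simp add: Spart_const_le algebra_simps)
next
  case (step k)
  then show ?case by (simp add: Spart_Suc xext_def)
qed

lemma lidx_eqI:
  assumes "mono (Spart t x)" and "1 \<le> l"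
    and "Spart t x (l - 1) < (\<Sum>i=1..r. y i)" and "(\<Sum>i=1..r. y i) \<le> Spart t x l"
  shows "lidx r t y x = l"
  unfolding lidx_def
proof (rule the_equality)
  fix l' assume l': "1 \<le> l' \<and> Spart t x (l' - 1) < (\<Sum>i=1..r. y i) \<and> (\<Sum>i=1..r. y i) \<le> Spart t x l'"
  show "l' = l"
  proof (rule ccontr)
    assume "l' \<noteq> l"
    then consider "l' \<le> l - 1" | "l \<le> l' - 1" by linarith
    then show False
      by cases (use l' assms monoD[OF assms(1)] in \<open>fastforce+\<close>)
  qed
qed (use assms in auto)

lemma ex_bracketing_index:
  fixes c s :: real
  assumes "0 < c" and "0 < s"
  shows "\<exists>l::nat. 1 \<le> l \<and> c * (real l - 1) < s \<and> s \<le> c * real l"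
proof -
  define l where "l = nat \<lceil>s / c\<rceil>"
  have pos: "0 < s / c" using assms by simp
  then have l: "real l = of_int \<lceil>s / c\<rceil>" by (simp add: l_def)
  have "real l - 1 < s / c" "s / c \<le> real l" unfolding l by linarith+
  then have "c * (real l - 1) < c * (s / c)" "c * (s / c) \<le> c * real l"
    using assms(1) by (simp_all only: mult_strict_left_mono mult_left_mono less_imp_le)
  moreover have "1 \<le> l" using pos l by linarith
  ultimately show ?thesis using assms(1) by auto
qed

lemma sum_Icc_real_of_nat: "(\<Sum>i=1..n. real i) = real n * (real n + 1) / 2"
  using double_gauss_sum_from_Suc_0[where 'a = real, of n] by simp

lemma sum_tail_real_of_nat:
  assumes "l \<le> t"
  shows "(\<Sum>i=l+1..t. real i) = (real t * (real t + 1) - real l * (real l + 1)) / 2"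
  using assms
proof (induction t rule: dec_induct)
  case (step n)
  then show ?case by (simp add: algebra_simps)
qed simp

lemma Bcost_const_lower_bound_inside:
  fixes r t :: nat and y :: "nat \<Rightarrow> real" and \<alpha> :: real
  defines "S \<equiv> \<Sum>i=1..r. y i" and "c \<equiv> 1 - \<alpha>"
  assumes "\<alpha> < 1" and "0 < S" and "S \<le> c * real t"
  shows "S * (S + c) + c * \<alpha> * (real t * (real t + 1)) \<le> 2 * c * Bcost r t y (\<lambda>_. \<alpha>)"
proof -
  have c: "0 < c" using assms by simp
  obtain l where l: "1 \<le> l" "c * (real l - 1) < S" "S \<le> c * real l"
    using ex_bracketing_index[OF c \<open>0 < S\<close>] by blast
  have "c * (real l - 1) < c * real t" using l(2) assms(5) by linarith
  then have "l \<le> t" using c by simp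
  then have sp: "Spart t (\<lambda>_. \<alpha>) (l - 1) = c * (real l - 1)" "Spart t (\<lambda>_. \<alpha>) l = c * real l"
    using l(1) by (simp_all add: Spart_const_le c_def of_nat_diff)
  have lidx: "lidx r t y (\<lambda>_. \<alpha>) = l"
    using l sp assms by (intro lidx_eqI mono_Spart) (simp_all add: S_def)
  have rho: "rho r t y (\<lambda>_. \<alpha>) = S - c * (real l - 1)"
    unfolding rho_def lidx sp(1) S_def ..
  have tail: "(\<Sum>i=l+1..t. real i * \<alpha>) = \<alpha> * (real t * (real t + 1) - real l * (real l + 1)) / 2"
    unfolding sum_distrib_right[symmetric] sum_tail_real_of_nat[OF \<open>l \<le> t\<close>] by simp
  have B: "Bcost r t y (\<lambda>_. \<alpha>) = real l * (real l - 1) / 2 + (\<alpha> + (S - c * (real l - 1))) * real l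
      + \<alpha> * (real t * (real t + 1) - real l * (real l + 1)) / 2"
    using \<open>l \<le> t\<close> unfolding Bcost_def Let_def lidx rho tail by (simp add: xext_def)
  have "2 * c * Bcost r t y (\<lambda>_. \<alpha>)
      = S * (S + c) + (c * real l - S) * (S - c * (real l - 1)) + c * \<alpha> * (real t * (real t + 1))"
    unfolding B c_def by (simp add: field_simps)
  moreover have "0 \<le> (c * real l - S) * (S - c * (real l - 1))" using l by simp
  ultimately show ?thesis by linarith
qed

lemma Bcost_const_lower_bound_beyond:
  fixes r t :: nat and y :: "nat \<Rightarrow> real" and \<alpha> :: real
  defines "v \<equiv> (\<Sum>i=1..r. y i) + \<alpha> * real t"
  assumes "\<alpha> \<le> 1" and "(1 - \<alpha>) * real t < (\<Sum>i=1..r. y i)"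
  shows "v * (v + 1) \<le> 2 * Bcost r t y (\<lambda>_. \<alpha>)"
proof -
  have "real t < v" using assms by (simp add: algebra_simps)
  then obtain l where l: "1 \<le> l" "real l - 1 < v" "v \<le> real l"
    using ex_bracketing_index[of 1 v] by auto
  have "t < l" using l(3) \<open>real t < v\<close> by linarith
  then have sp: "Spart t (\<lambda>_. \<alpha>) (l - 1) = real l - 1 - \<alpha> * real t"
      "Spart t (\<lambda>_. \<alpha>) l = real l - \<alpha> * real t"
    by (simp_all add: Spart_const_ge of_nat_diff)
  have lidx: "lidx r t y (\<lambda>_. \<alpha>) = l"
    using l sp assms by (intro lidx_eqI mono_Spart) (simp_all add: v_def)
  have rho: "rho r t y (\<lambda>_. \<alpha>) = v - (real l - 1)"
    unfolding rho_def lidx sp(1) v_def by simp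
  have B: "Bcost r t y (\<lambda>_. \<alpha>) = real l * (real l - 1) / 2 + (v - (real l - 1)) * real l"
    using \<open>t < l\<close> unfolding Bcost_def Let_def lidx rho by (simp add: xext_def)
  have "2 * Bcost r t y (\<lambda>_. \<alpha>) = v * (v + 1) + (real l - v) * (v - (real l - 1))"
    unfolding B by (simp add: field_simps)
  moreover have "0 \<le> (real l - v) * (v - (real l - 1))" using l by simp
  ultimately show ?thesis by linarith
qed

lemma divide_le_of_lower_bound:
  fixes a b d k :: real
  assumes "0 \<le> a" and "0 < d" and "0 < k" and "d \<le> k * b"
  shows "a / b \<le> k * a / d"
proof -
  have "d / k \<le> b" using assms(3,4) by (simp add: pos_divide_le_eq mult.commute)
  then have "a / b \<le> a / (d / k)" using assms by (intro frac_le) simp_all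
  then show ?thesis by (simp add: mult.commute)
qed

lemma Acost_nonneg:
  assumes "\<And>i. 0 \<le> y i" and "\<And>i. 0 \<le> x i"
  shows "0 \<le> Acost r t y x"
  unfolding Acost_def using assms by (intro add_nonneg_nonneg sum_nonneg mult_nonneg_nonneg) simp_all

lemma sum_step_profile:
  assumes "1 \<le> r"
  shows "(\<Sum>i=1..r. (if i < r then 2/3 else \<alpha>)) = 2/3 * (real r - 1) + (\<alpha>::real)"
proof -
  obtain m where r: "r = Suc m" using assms by (cases r) auto
  have "(\<Sum>i=1..m. (if i < r then 2/3 else \<alpha>)) = (\<Sum>i=1..m. 2/3 :: real)"
    by (rule sum.cong) (auto simp: r)
  then show ?thesis by (simp add: r)
qed

lemma Acost_step_profile:
  assumes "1 \<le> r"
  shows "6 * Acost r t (\<lambda>i. if i < r then 2/3 else \<alpha>) (\<lambda>_. \<alpha>)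
       = 2 * real r * (real r - 1) + 3 * \<alpha> * (real t + 1) * (2 * real r + real t)"
proof -
  obtain m where r: "r = Suc m" using assms by (cases r) auto
  have "(\<Sum>i=1..m. real i * (if i < r then 2/3 else \<alpha>)) = (\<Sum>i=1..m. real i) * (2/3)"
    unfolding sum_distrib_right by (rule sum.cong) (auto simp: r)
  also have "\<dots> = real m * (real m + 1) / 3"
    unfolding sum_Icc_real_of_nat by simp
  finally have y: "(\<Sum>i=1..r. real i * (if i < r then 2/3 else \<alpha>)) = real m * (real m + 1) / 3 + real r * \<alpha>"
    by (simp add: r)
  have "(\<Sum>i=1..t. real (r + i) * \<alpha>) = (\<Sum>i=1..t. real r * \<alpha>) + (\<Sum>i=1..t. real i) * \<alpha>"
    unfolding sum_distrib_right sum.distrib[symmetric] by (simp add: algebra_simps)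
  also have "\<dots> = real t * real r * \<alpha> + \<alpha> * (real t * (real t + 1) / 2)"
    unfolding sum_Icc_real_of_nat by simp
  finally show ?thesis
    unfolding Acost_def y by (simp add: r field_simps)
qed

lemma Rratio_const_le_inside:
  fixes r t :: nat and y :: "nat \<Rightarrow> real" and \<alpha> :: real
  defines "S \<equiv> \<Sum>i=1..r. y i" and "c \<equiv> 1 - \<alpha>"
  assumes "0 \<le> \<alpha>" and "\<alpha> < 1" and "0 < S" and "S \<le> c * real t"
    and "0 \<le> Acost r t y (\<lambda>_. \<alpha>)"
  shows "Rratio r t y (\<lambda>_. \<alpha>)
    \<le> 2 * c * Acost r t y (\<lambda>_. \<alpha>) / (S * (S + c) + c * \<alpha> * (real t * (real t + 1)))"
proof -
  have "0 < S * (S + c)" "0 \<le> c * \<alpha> * (real t * (real t + 1))"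
    using assms by simp_all
  then have "0 < S * (S + c) + c * \<alpha> * (real t * (real t + 1))" by linarith
  then show ?thesis
    unfolding Rratio_def using assms(3-7) Bcost_const_lower_bound_inside[of \<alpha> y r t]
    by (intro divide_le_of_lower_bound) (simp_all add: S_def c_def)
qed

lemma Rratio_const_le_beyond:
  fixes r t :: nat and y :: "nat \<Rightarrow> real" and \<alpha> :: real
  defines "v \<equiv> (\<Sum>i=1..r. y i) + \<alpha> * real t"
  assumes "\<alpha> \<le> 1" and "(1 - \<alpha>) * real t < (\<Sum>i=1..r. y i)"
    and "0 \<le> Acost r t y (\<lambda>_. \<alpha>)"
  shows "Rratio r t y (\<lambda>_. \<alpha>) \<le> 2 * Acost r t y (\<lambda>_. \<alpha>) / (v * (v + 1))"
proof -
  have "0 < v" using assms(3) unfolding v_def by (simp add: algebra_simps add_pos_nonneg)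
  then show ?thesis
    unfolding Rratio_def using assms Bcost_const_lower_bound_beyond[of \<alpha> t y r]
    by (intro divide_le_of_lower_bound) simp_all
qed

lemma H1_eq_quotient:
  fixes A \<alpha> :: real and r t :: nat
  defines "S \<equiv> 2/3 * (real r - 1) + \<alpha>"
  assumes A: "6 * A = 2 * real r * (real r - 1) + 3 * \<alpha> * (real t + 1) * (2 * real r + real t)"
  shows "H1 \<alpha> r t = 2 * (1 - \<alpha>) * A / (S * (S + (1 - \<alpha>)) + (1 - \<alpha>) * \<alpha> * (real t * (real t + 1)))"
proof -
  have num: "3 * \<alpha> * (real t + 1) * (2 * real r + real t) + 2 * real r * (real r - 1) = 6 * A"
    using A by linarith
  have den: "3 * \<alpha> + 4 * (real r)\<^sup>2 + (6 * \<alpha> - 2) * real r + 9 * (1 - \<alpha>) * \<alpha> * real t * (real t + 1) - 2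
      = 9 * (S * (S + (1 - \<alpha>)) + (1 - \<alpha>) * \<alpha> * (real t * (real t + 1)))"
    by (simp add: S_def field_simps power2_eq_square)
  have "3 * (1 - \<alpha>) * (6 * A) = 9 * (2 * (1 - \<alpha>) * A)" by simp
  then show ?thesis
    unfolding H1_def num den by (simp only: mult_divide_mult_cancel_left zero_neq_numeral not_False_eq_True)
qed

lemma H2_eq_quotient:
  fixes A \<alpha> :: real and r t :: nat
  defines "v \<equiv> 2/3 * (real r - 1) + \<alpha> + \<alpha> * real t"
  assumes A: "6 * A = 2 * real r * (real r - 1) + 3 * \<alpha> * (real t + 1) * (2 * real r + real t)"
  shows "H2 \<alpha> r t = 2 * A / (v * (v + 1))"
proof -
  have num: "6 * real r * (real r - 1) + 9 * \<alpha> * (real t + 1) * (2 * real r + real t) = 18 * A"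
    using A by linarith
  have den: "(2 * real r + 3 * \<alpha> * (real t + 1) - 2) * (2 * real r + 3 * \<alpha> * (real t + 1) + 1)
      = 9 * (v * (v + 1))"
    by (simp add: v_def field_simps)
  show ?thesis
    unfolding H2_def num den by simp
qed

theorem claim3:
  fixes r t :: nat and \<alpha> :: real and y' x' :: "nat \<Rightarrow> real"
  assumes "r \<ge> 1"
    and "1/2 \<le> \<alpha>" and "\<alpha> \<le> 2/3"
    and "y' = (\<lambda>i. if i < r then 2/3 else \<alpha>)"
    and "x' = (\<lambda>i. \<alpha>)"
  shows "(2/3 * (real r - 1) + \<alpha> \<le> (1 - \<alpha>) * real t \<longrightarrow> Rratio r t y' x' \<le> H1 \<alpha> r t)
       \<and> (2/3 * (real r - 1) + \<alpha> > (1 - \<alpha>) * real t \<longrightarrow> Rratio r t y' x' \<le> H2 \<alpha> r t)"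
proof -
  define S where "S = 2/3 * (real r - 1) + \<alpha>"
  define A where "A = Acost r t y' x'"
  have sum_y': "(\<Sum>i=1..r. y' i) = S"
    using sum_step_profile[OF assms(1)] by (simp add: assms(4) S_def)
  have A: "6 * A = 2 * real r * (real r - 1) + 3 * \<alpha> * (real t + 1) * (2 * real r + real t)"
    using Acost_step_profile[OF assms(1)] by (simp add: A_def assms(4,5))
  have "0 \<le> 2/3 * (real r - 1)" using assms(1) by simp
  then have "0 < S" using assms(2) unfolding S_def by linarith
  have "0 \<le> A"
    unfolding A_def assms(4,5) using assms(2) by (intro Acost_nonneg) simp_all
  show ?thesis
    unfolding S_def[symmetric]
  proof (intro conjI impI)
    assume "S \<le> (1 - \<alpha>) * real t"
    then show "Rratio r t y' x' \<le> H1 \<alpha> r t"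
      using Rratio_const_le_inside[of \<alpha> y' r t] \<open>0 < S\<close> \<open>0 \<le> A\<close> assms(2,3)
      unfolding H1_eq_quotient[OF A] sum_y' S_def[symmetric] A_def assms(5) by simp
  next
    assume "(1 - \<alpha>) * real t < S"
    then show "Rratio r t y' x' \<le> H2 \<alpha> r t"
      using Rratio_const_le_beyond[of \<alpha> t y' r] \<open>0 \<le> A\<close> assms(3)
      unfolding H2_eq_quotient[OF A] sum_y' S_def[symmetric] A_def assms(5) by simp
  qed
qed

end
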